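(* Let $1<q<+\infty$ and let $u:\mathbb{R}^3\to\mathbb{R}^3$ satisfy $\nabla\cdot u=0$ and $\nabla u\in L^q(\mathbb{R}^3)$. Let $\omega=\nabla\times u$ and $S=\frac12\left(\nabla u+(\nabla u)^{tr}\right)$. Then for every fixed unit vector $v\in\mathbb{R}^3$, \begin{align*} \|(v\cdot\nabla)u\|_{L^q}&\le C_q\|v\times\omega\|_{L^q}, & \|(v\cdot\nabla)u\|_{L^q}&\le C_q\|2Sv\|_{L^q},\\ \|\nabla(u\cdot v)\|_{L^q}&\le C_q\|v\times\omega\|_{L^q}, & \|\nabla(u\cdot v)\|_{L^q}&\le C_q\|2Sv\|_{L^q}, \end{align*} and furthermore \[ \frac{1}{2C_q}\|v\times\omega\|_{L^q}\le\|2Sv\|_{L^q}\le 2C_q\|v\times\omega\|_{L^q}, \] where $C_q$ is the constant described in the context.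
   Context: Helmholtz decomposition: for $1<q<+\infty$, every $w\in L^q(\mathbb{R}^3;\mathbb{R}^3)$ decomposes uniquely as $w=P_{df}(w)+P_{gr}(w)$, where $P_{df}(w)\in L^q$ is weakly divergence free ($\int P_{df}(w)\cdot\nabla\phi=0$ for all $\phi\in C_c^\infty(\mathbb{R}^3)$) and $P_{gr}(w)=\nabla f\in L^q$ is a gradient ($\int\nabla f\cdot z=0$ for all divergence-free $z\in C_c^\infty(\mathbb{R}^3;\mathbb{R}^3)$). $C_q\ge1$ is a constant depending only on $q$ such that $\|P_{df}(w)\|_{L^q}\le C_q\|w\|_{L^q}$ and $\|P_{gr}(w)\|_{L^q}\le C_q\|w\|_{L^q}$ for all $w\in L^q(\mathbb{R}^3;\mathbb{R}^3)$. Here $(\nabla u)_{ij}=\partial_iu_j$. *)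

theory Defs
  imports "HOL-Analysis.Analysis"
begin

definition pdiff :: "3 \<Rightarrow> (real^3 \<Rightarrow> real) \<Rightarrow> real^3 \<Rightarrow> real" where
  "pdiff i f x = frechet_derivative f (at x) (axis i 1)"

text \<open>C-infinity functions: differentiable everywhere, with all partial
  derivatives again C-infinity (greatest such class).\<close>
coinductive smooth3 :: "(real^3 \<Rightarrow> real) \<Rightarrow> bool" where
  "(\<forall>x. f differentiable (at x)) \<Longrightarrow> (\<forall>i. smooth3 (pdiff i f)) \<Longrightarrow> smooth3 f"

definition test_fun :: "(real^3 \<Rightarrow> real) \<Rightarrow> bool" where
  "test_fun \<phi> \<longleftrightarrow> smooth3 \<phi> \<and> bounded {x. \<phi> x \<noteq> 0}"

definition test_field :: "(real^3 \<Rightarrow> real^3) \<Rightarrow> bool" where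
  "test_field z \<longleftrightarrow> (\<forall>j. test_fun (\<lambda>x. z x $ j))"

definition grad3 :: "(real^3 \<Rightarrow> real) \<Rightarrow> real^3 \<Rightarrow> real^3" where
  "grad3 \<phi> x = (\<chi> i. pdiff i \<phi> x)"

definition div3 :: "(real^3 \<Rightarrow> real^3) \<Rightarrow> real^3 \<Rightarrow> real" where
  "div3 z x = (\<Sum>i\<in>UNIV. pdiff i (\<lambda>y. z y $ i) x)"

definition in_Lq :: "real \<Rightarrow> (real^3 \<Rightarrow> 'a::euclidean_space) \<Rightarrow> bool" where
  "in_Lq q f \<longleftrightarrow> f \<in> borel_measurable lebesgue \<and>
     integrable lebesgue (\<lambda>x. norm (f x) powr q)"

definition Lq_norm :: "real \<Rightarrow> (real^3 \<Rightarrow> 'a::euclidean_space) \<Rightarrow> real" where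
  "Lq_norm q f = (integral\<^sup>L lebesgue (\<lambda>x. norm (f x) powr q)) powr (1 / q)"

definition weakly_div_free :: "(real^3 \<Rightarrow> real^3) \<Rightarrow> bool" where
  "weakly_div_free w \<longleftrightarrow>
     (\<forall>\<phi>. test_fun \<phi> \<longrightarrow> integral\<^sup>L lebesgue (\<lambda>x. w x \<bullet> grad3 \<phi> x) = 0)"

definition is_gradient_field :: "(real^3 \<Rightarrow> real^3) \<Rightarrow> bool" where
  "is_gradient_field w \<longleftrightarrow>
     (\<forall>z. test_field z \<and> (\<forall>x. div3 z x = 0) \<longrightarrow>
          integral\<^sup>L lebesgue (\<lambda>x. w x \<bullet> z x) = 0)"

definition helmholtz_const :: "real \<Rightarrow> real \<Rightarrow> bool" where
  "helmholtz_const q C \<longleftrightarrow> C \<ge> 1 \<and>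
     (\<forall>w a b. in_Lq q w \<and> in_Lq q a \<and> in_Lq q b \<and>
        weakly_div_free a \<and> is_gradient_field b \<and>
        (AE x in lebesgue. w x = a x + b x) \<longrightarrow>
          Lq_norm q a \<le> C * Lq_norm q w \<and> Lq_norm q b \<le> C * Lq_norm q w)"

text \<open>G x $ i $ j is the weak derivative d_i u_j (convention (grad u)_ij = d_i u_j).\<close>
definition weak_grad :: "(real^3 \<Rightarrow> real^3) \<Rightarrow> (real^3 \<Rightarrow> real^3^3) \<Rightarrow> bool" where
  "weak_grad u G \<longleftrightarrow>
     u \<in> borel_measurable lebesgue \<and> G \<in> borel_measurable lebesgue \<and>
     (\<forall>K. compact K \<longrightarrow> set_integrable lebesgue K u \<and> set_integrable lebesgue K G) \<and>
     (\<forall>\<phi> i j. test_fun \<phi> \<longrightarrow>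
        integral\<^sup>L lebesgue (\<lambda>x. u x $ j * pdiff i \<phi> x) =
        - integral\<^sup>L lebesgue (\<lambda>x. G x $ i $ j * \<phi> x))"

definition curl_of :: "real^3^3 \<Rightarrow> real^3" where
  "curl_of A = vector [A$2$3 - A$3$2, A$3$1 - A$1$3, A$1$2 - A$2$1]"

definition sym_part :: "real^3^3 \<Rightarrow> real^3^3" where
  "sym_part A = (1/2) *\<^sub>R (A + transpose A)"

end

theory Submission
  imports Defs
begin

text \<open>
  Put \<open>a = (v \<cdot> \<nabla>) u = v v* G\<close> and \<open>b = \<nabla>(u \<cdot> v) = G *v v\<close>. Because \<open>div u = 0\<close> and mixed
  partial derivatives of test functions commute, \<open>a\<close> is weakly divergence free, and \<open>b\<close> is
  weakly a gradient. Pointwise \<open>v \<times> \<omega> = b - a\<close> and \<open>2 S v = a + b\<close>, so both fields come with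
  a Helmholtz decomposition, and \<open>C\<^sub>q\<close> bounds \<open>a\<close> and \<open>b\<close> by either norm. The two-sided
  comparison then follows from \<open>\<parallel>f + g\<parallel>\<^sub>q \<le> 2 max \<parallel>f\<parallel>\<^sub>q \<parallel>g\<parallel>\<^sub>q\<close>, a consequence of the convexity
  of \<open>t\<^sup>q\<close>.
\<close>

lemma smooth3_differentiable: "smooth3 f \<Longrightarrow> f differentiable (at x)"
  by (auto elim: smooth3.cases)

lemma smooth3_pdiff: "smooth3 f \<Longrightarrow> smooth3 (pdiff i f)"
  by (auto elim: smooth3.cases)

lemma pdiff_eq_0_outside_closure:
  assumes "x \<notin> closure {y. f y \<noteq> 0}"
  shows "pdiff i f x = 0"
proof -
  have "((\<lambda>_. 0) has_derivative (\<lambda>_. 0)) (at x)"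
    by simp
  then have "(f has_derivative (\<lambda>_. 0)) (at x)"
    by (rule has_derivative_transform_within_open[of _ _ _ _ "- closure {y. f y \<noteq> 0}"])
      (use assms in \<open>auto intro: closure_subset[THEN subsetD]\<close>)
  then show ?thesis
    unfolding pdiff_def using frechet_derivative_at by metis
qed

lemma test_fun_pdiff: "test_fun f \<Longrightarrow> test_fun (pdiff i f)"
  unfolding test_fun_def
  using smooth3_pdiff pdiff_eq_0_outside_closure
  by (metis (mono_tags, lifting) bounded_closure bounded_subset mem_Collect_eq subsetI)

lemma test_fun_continuous: "test_fun \<phi> \<Longrightarrow> continuous_on UNIV \<phi>"
  unfolding test_fun_def
  by (meson continuous_at_imp_continuous_on differentiable_imp_continuous_within smooth3_differentiable)

lemma has_real_derivative_along_line:
  fixes f :: "'a::real_normed_vector \<Rightarrow> real"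
  assumes "\<And>y. f differentiable (at y)"
  shows "((\<lambda>s. f (p + s *\<^sub>R e)) has_real_derivative frechet_derivative f (at (p + t *\<^sub>R e)) e) (at t)"
proof -
  let ?F = "frechet_derivative f (at (p + t *\<^sub>R e))"
  have F: "(f has_derivative ?F) (at (p + t *\<^sub>R e))"
    using assms frechet_derivative_works by blast
  have "((\<lambda>s. p + s *\<^sub>R e) has_derivative (\<lambda>s. s *\<^sub>R e)) (at t)"
    by (auto intro!: derivative_eq_intros)
  from diff_chain_at[OF this F] have "((\<lambda>s. f (p + s *\<^sub>R e)) has_derivative (\<lambda>s. ?F (s *\<^sub>R e))) (at t)"
    by (simp add: o_def)
  moreover have "(\<lambda>s. ?F (s *\<^sub>R e)) = (*) (?F e)"
    using linear_scale[OF has_derivative_linear[OF F]] by (simp add: fun_eq_iff mult.commute)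
  ultimately show ?thesis
    unfolding has_field_derivative_def by simp
qed

lemma second_difference_mean_value:
  fixes f :: "'a::real_normed_vector \<Rightarrow> real"
  assumes f: "\<And>y. f differentiable (at y)"
    and f': "\<And>y. (\<lambda>z. frechet_derivative f (at z) e) differentiable (at y)"
    and h: "h > 0"
  shows "\<exists>y. dist y x \<le> h * (norm d + norm e) \<and>
    f (x + h *\<^sub>R d + h *\<^sub>R e) - f (x + h *\<^sub>R e) - f (x + h *\<^sub>R d) + f x =
      h * h * frechet_derivative (\<lambda>z. frechet_derivative f (at z) e) (at y) d"
proof -
  let ?f' = "\<lambda>z. frechet_derivative f (at z) e"
  define \<alpha> where "\<alpha> s = f (x + h *\<^sub>R d + s *\<^sub>R e) - f (x + s *\<^sub>R e)" for s
  have "(\<alpha> has_real_derivative ?f' (x + h *\<^sub>R d + s *\<^sub>R e) - ?f' (x + s *\<^sub>R e)) (at s)" for s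
    unfolding \<alpha>_def by (intro DERIV_diff has_real_derivative_along_line f)
  from MVT2[OF h this] obtain \<sigma> where \<sigma>: "0 < \<sigma>" "\<sigma> < h"
    and \<alpha>_diff: "\<alpha> h - \<alpha> 0 = h * (?f' (x + h *\<^sub>R d + \<sigma> *\<^sub>R e) - ?f' (x + \<sigma> *\<^sub>R e))"
    by auto
  define \<beta> where "\<beta> t = ?f' (x + \<sigma> *\<^sub>R e + t *\<^sub>R d)" for t
  have "(\<beta> has_real_derivative frechet_derivative ?f' (at (x + \<sigma> *\<^sub>R e + t *\<^sub>R d)) d) (at t)" for t
    unfolding \<beta>_def by (rule has_real_derivative_along_line[OF f'])
  from MVT2[OF h this] obtain \<tau> where \<tau>: "0 < \<tau>" "\<tau> < h"
    and \<beta>_diff: "\<beta> h - \<beta> 0 = h * frechet_derivative ?f' (at (x + \<sigma> *\<^sub>R e + \<tau> *\<^sub>R d)) d"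
    by auto
  let ?y = "x + \<sigma> *\<^sub>R e + \<tau> *\<^sub>R d"
  have "dist ?y x \<le> \<sigma> * norm e + \<tau> * norm d"
    using \<sigma> \<tau> norm_triangle_ineq[of "\<sigma> *\<^sub>R e" "\<tau> *\<^sub>R d"] by (simp add: dist_norm add.assoc)
  also have "\<dots> \<le> h * (norm d + norm e)"
    using \<sigma> \<tau> mult_right_mono[of \<sigma> h "norm e"] mult_right_mono[of \<tau> h "norm d"]
    by (simp add: distrib_left)
  finally have "dist ?y x \<le> h * (norm d + norm e)" .
  moreover have "\<alpha> h - \<alpha> 0 = h * (\<beta> h - \<beta> 0)"
    unfolding \<alpha>_diff \<beta>_def by (simp add: add_ac)
  ultimately show ?thesis
    using \<beta>_diff by (auto simp: \<alpha>_def)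
qed

lemma frechet_derivative_mixed_commute:
  fixes f :: "'a::real_normed_vector \<Rightarrow> real" and d e :: 'a
  defines "f\<^sub>d \<equiv> \<lambda>z. frechet_derivative f (at z) d" and "f\<^sub>e \<equiv> \<lambda>z. frechet_derivative f (at z) e"
  assumes f: "\<And>y. f differentiable (at y)"
    and f\<^sub>d: "\<And>y. f\<^sub>d differentiable (at y)" and f\<^sub>e: "\<And>y. f\<^sub>e differentiable (at y)"
    and cont: "isCont (\<lambda>y. frechet_derivative f\<^sub>e (at y) d) x" "isCont (\<lambda>y. frechet_derivative f\<^sub>d (at y) e) x"
  shows "frechet_derivative f\<^sub>e (at x) d = frechet_derivative f\<^sub>d (at x) e"
proof -
  let ?D\<^sub>1 = "\<lambda>y. frechet_derivative f\<^sub>e (at y) d" and ?D\<^sub>2 = "\<lambda>y. frechet_derivative f\<^sub>d (at y) e"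
  \<comment> \<open>the same second difference, divided by \<open>h\<^sup>2\<close>, is a value of \<open>?D\<^sub>1\<close> and of \<open>?D\<^sub>2\<close> near \<open>x\<close>\<close>
  have close: "\<bar>?D\<^sub>1 x - ?D\<^sub>2 x\<bar> < 2 * \<epsilon>" if "\<epsilon> > 0" for \<epsilon>
  proof -
    obtain \<delta>\<^sub>1 where "\<delta>\<^sub>1 > 0" and \<delta>\<^sub>1: "\<And>y. dist y x < \<delta>\<^sub>1 \<Longrightarrow> \<bar>?D\<^sub>1 y - ?D\<^sub>1 x\<bar> < \<epsilon>"
      using cont(1) \<open>\<epsilon> > 0\<close> unfolding continuous_at_eps_delta dist_real_def by blast
    obtain \<delta>\<^sub>2 where "\<delta>\<^sub>2 > 0" and \<delta>\<^sub>2: "\<And>y. dist y x < \<delta>\<^sub>2 \<Longrightarrow> \<bar>?D\<^sub>2 y - ?D\<^sub>2 x\<bar> < \<epsilon>"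
      using cont(2) \<open>\<epsilon> > 0\<close> unfolding continuous_at_eps_delta dist_real_def by blast
    define h where "h = min \<delta>\<^sub>1 \<delta>\<^sub>2 / (norm d + norm e + 1)"
    have N: "norm d + norm e + 1 > 0"
      using norm_ge_zero[of d] norm_ge_zero[of e] by linarith
    then have "h > 0"
      using \<open>\<delta>\<^sub>1 > 0\<close> \<open>\<delta>\<^sub>2 > 0\<close> by (simp add: h_def)
    have "h * (norm d + norm e) < h * (norm d + norm e + 1)"
      using \<open>h > 0\<close> by simp
    also have "\<dots> = min \<delta>\<^sub>1 \<delta>\<^sub>2"
      using N by (simp add: h_def)
    finally have h_small: "h * (norm d + norm e) < min \<delta>\<^sub>1 \<delta>\<^sub>2" .
    obtain y\<^sub>1 where y\<^sub>1: "dist y\<^sub>1 x \<le> h * (norm d + norm e)"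
      "f (x + h *\<^sub>R d + h *\<^sub>R e) - f (x + h *\<^sub>R e) - f (x + h *\<^sub>R d) + f x = h * h * ?D\<^sub>1 y\<^sub>1"
      using second_difference_mean_value[OF f f\<^sub>e[unfolded f\<^sub>e_def] \<open>h > 0\<close>] unfolding f\<^sub>e_def by blast
    obtain y\<^sub>2 where y\<^sub>2: "dist y\<^sub>2 x \<le> h * (norm e + norm d)"
      "f (x + h *\<^sub>R e + h *\<^sub>R d) - f (x + h *\<^sub>R d) - f (x + h *\<^sub>R e) + f x = h * h * ?D\<^sub>2 y\<^sub>2"
      using second_difference_mean_value[OF f f\<^sub>d[unfolded f\<^sub>d_def] \<open>h > 0\<close>] unfolding f\<^sub>d_def by blast
    have swap: "x + h *\<^sub>R e + h *\<^sub>R d = x + h *\<^sub>R d + h *\<^sub>R e"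
      by (simp add: add_ac)
    have "h * h * ?D\<^sub>1 y\<^sub>1 = h * h * ?D\<^sub>2 y\<^sub>2"
      using y\<^sub>1(2) y\<^sub>2(2) unfolding swap by linarith
    then have "?D\<^sub>1 y\<^sub>1 = ?D\<^sub>2 y\<^sub>2"
      using \<open>h > 0\<close> by simp
    moreover have "\<bar>?D\<^sub>1 y\<^sub>1 - ?D\<^sub>1 x\<bar> < \<epsilon>" "\<bar>?D\<^sub>2 y\<^sub>2 - ?D\<^sub>2 x\<bar> < \<epsilon>"
      using \<delta>\<^sub>1 \<delta>\<^sub>2 y\<^sub>1(1) y\<^sub>2(1) h_small by (simp_all add: add.commute)
    ultimately show ?thesis
      by linarith
  qed
  show ?thesis
    using close[of "\<bar>?D\<^sub>1 x - ?D\<^sub>2 x\<bar> / 2"] by (cases "?D\<^sub>1 x = ?D\<^sub>2 x") auto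
qed

lemma pdiff_commute:
  assumes "smooth3 f"
  shows "pdiff i (pdiff j f) x = pdiff j (pdiff i f) x"
proof -
  have eta: "pdiff k g = (\<lambda>z. frechet_derivative g (at z) (axis k 1))" for k g
    by (simp add: pdiff_def fun_eq_iff)
  have "isCont (pdiff k (pdiff l f)) x" for k l
    using assms by (meson differentiable_imp_continuous_within smooth3_differentiable smooth3_pdiff)
  then show ?thesis
    using assms unfolding eta
    by (intro frechet_derivative_mixed_commute[symmetric]) (auto simp flip: eta
        intro: smooth3_differentiable smooth3_pdiff)
qed

lemma integrable_scaleR_bounded_support:
  fixes \<psi> :: "'a::euclidean_space \<Rightarrow> real" and h :: "'a \<Rightarrow> 'b::{banach, second_countable_topology}"
  assumes h: "h \<in> borel_measurable lebesgue" "\<And>K. compact K \<Longrightarrow> set_integrable lebesgue K h"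
    and \<psi>: "continuous_on UNIV \<psi>" "bounded {x. \<psi> x \<noteq> 0}"
  shows "integrable lebesgue (\<lambda>x. \<psi> x *\<^sub>R h x)"
proof -
  let ?K = "closure {x. \<psi> x \<noteq> 0}"
  have K: "compact ?K"
    using \<psi>(2) by (simp add: compact_eq_bounded_closed bounded_closure)
  then obtain B where B: "\<And>x. x \<in> ?K \<Longrightarrow> \<bar>\<psi> x\<bar> \<le> B"
    using compact_imp_bounded[OF compact_continuous_image[OF continuous_on_subset[OF \<psi>(1)] K]]
    by (auto simp: bounded_iff)
  show ?thesis
  proof (rule Bochner_Integration.integrable_bound)
    show "integrable lebesgue (\<lambda>x. B *\<^sub>R (indicator ?K x *\<^sub>R h x))"
      using h(2)[OF K] unfolding set_integrable_def by (rule integrable_scaleR_right)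
    have "\<psi> \<in> borel_measurable lebesgue"
      using continuous_imp_measurable_on_sets_lebesgue[of UNIV \<psi>] \<psi>(1) by simp
    then show "(\<lambda>x. \<psi> x *\<^sub>R h x) \<in> borel_measurable lebesgue"
      using h(1) by (rule borel_measurable_scaleR)
    show "AE x in lebesgue. norm (\<psi> x *\<^sub>R h x) \<le> norm (B *\<^sub>R (indicator ?K x *\<^sub>R h x))"
    proof (intro AE_I2)
      fix x
      show "norm (\<psi> x *\<^sub>R h x) \<le> norm (B *\<^sub>R (indicator ?K x *\<^sub>R h x))"
      proof (cases "x \<in> ?K")
        case True
        have "norm (\<psi> x *\<^sub>R h x) = \<bar>\<psi> x\<bar> * norm (h x)"
          by simp
        also have "\<dots> \<le> \<bar>B\<bar> * norm (h x)"
          using B[OF True] by (intro mult_right_mono) auto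
        also have "\<dots> = norm (B *\<^sub>R (indicator ?K x *\<^sub>R h x))"
          using True by simp
        finally show ?thesis .
      next
        case False
        then have "\<psi> x = 0"
          using closure_subset[of "{x. \<psi> x \<noteq> 0}"] by auto
        then show ?thesis
          by simp
      qed
    qed
  qed
qed

lemma weak_grad_integrable:
  assumes "weak_grad u G" "test_fun \<psi>"
  shows "integrable lebesgue (\<lambda>x. u x $ j * \<psi> x)"
    and "integrable lebesgue (\<lambda>x. G x $ i $ j * \<psi> x)"
proof -
  have \<psi>: "continuous_on UNIV \<psi>" "bounded {x. \<psi> x \<noteq> 0}"
    using assms(2) test_fun_continuous test_fun_def by auto
  have "u \<in> borel_measurable lebesgue" "\<And>K. compact K \<Longrightarrow> set_integrable lebesgue K u"
    and "G \<in> borel_measurable lebesgue" "\<And>K. compact K \<Longrightarrow> set_integrable lebesgue K G"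
    using assms(1) unfolding weak_grad_def by blast+
  then have scaled: "integrable lebesgue (\<lambda>x. \<psi> x *\<^sub>R u x)" "integrable lebesgue (\<lambda>x. \<psi> x *\<^sub>R G x)"
    using integrable_scaleR_bounded_support[OF _ _ \<psi>] by blast+
  have "integrable lebesgue (\<lambda>x. (\<psi> x *\<^sub>R u x) $ j)"
    using integrable_bounded_linear[OF bounded_linear_vec_nth scaled(1)] .
  moreover have "integrable lebesgue (\<lambda>x. (\<psi> x *\<^sub>R G x) $ i $ j)"
    using integrable_bounded_linear[OF bounded_linear_vec_nth
        integrable_bounded_linear[OF bounded_linear_vec_nth scaled(2)]] .
  ultimately show "integrable lebesgue (\<lambda>x. u x $ j * \<psi> x)"
    and "integrable lebesgue (\<lambda>x. G x $ i $ j * \<psi> x)"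
    by (simp_all add: mult.commute)
qed

lemma weak_grad_integral_by_parts:
  assumes "weak_grad u G" "test_fun \<phi>"
  shows "integral\<^sup>L lebesgue (\<lambda>x. G x $ i $ j * \<phi> x) =
    - integral\<^sup>L lebesgue (\<lambda>x. u x $ j * pdiff i \<phi> x)"
  using assms unfolding weak_grad_def by simp

lemma weakly_div_free_vector_matrix_mult:
  assumes grad: "weak_grad u G" and div: "AE x in lebesgue. (\<Sum>i\<in>UNIV. G x $ i $ i) = 0"
  shows "weakly_div_free (\<lambda>x. v v* G x)"
  unfolding weakly_div_free_def
proof (intro allI impI)
  fix \<phi> assume \<phi>: "test_fun \<phi>"
  have \<phi>': "test_fun (pdiff i \<phi>)" for i
    using \<phi> by (rule test_fun_pdiff)
  have int: "integrable lebesgue (\<lambda>x. G x $ i $ j * pdiff k \<phi> x)" for i j k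
    using weak_grad_integrable(2)[OF grad \<phi>'] .
  \<comment> \<open>both sides equal \<open>- \<integral> u\<^sub>j \<partial>\<^sub>i \<partial>\<^sub>j \<phi>\<close>\<close>
  have swap: "integral\<^sup>L lebesgue (\<lambda>x. G x $ i $ j * pdiff j \<phi> x) =
      integral\<^sup>L lebesgue (\<lambda>x. G x $ j $ j * pdiff i \<phi> x)" for i j
    using \<phi> weak_grad_integral_by_parts[OF grad \<phi>', of i j] weak_grad_integral_by_parts[OF grad \<phi>', of j j]
    by (simp add: pdiff_commute test_fun_def)
  have trace: "(\<Sum>j\<in>UNIV. integral\<^sup>L lebesgue (\<lambda>x. G x $ j $ j * pdiff i \<phi> x)) = 0" for i
  proof -
    have "AE x in lebesgue. (\<Sum>j\<in>UNIV. G x $ j $ j * pdiff i \<phi> x) = 0"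
      using div by eventually_elim (simp flip: sum_distrib_right)
    then have "integral\<^sup>L lebesgue (\<lambda>x. \<Sum>j\<in>UNIV. G x $ j $ j * pdiff i \<phi> x) = 0"
      by (rule integral_eq_zero_AE)
    then show ?thesis
      using int by (simp add: Bochner_Integration.integral_sum)
  qed
  have "(v v* G x) \<bullet> grad3 \<phi> x = (\<Sum>i\<in>UNIV. v $ i * (\<Sum>j\<in>UNIV. G x $ i $ j * pdiff j \<phi> x))" for x
    by (simp add: inner_vec_def vector_matrix_mult_def grad3_def sum_3 algebra_simps)
  then have "integral\<^sup>L lebesgue (\<lambda>x. (v v* G x) \<bullet> grad3 \<phi> x) =
      (\<Sum>i\<in>UNIV. v $ i * (\<Sum>j\<in>UNIV. integral\<^sup>L lebesgue (\<lambda>x. G x $ i $ j * pdiff j \<phi> x)))"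
    using int by (simp add: Bochner_Integration.integral_sum Bochner_Integration.integrable_sum)
  also have "\<dots> = (\<Sum>i\<in>UNIV. v $ i * (\<Sum>j\<in>UNIV. integral\<^sup>L lebesgue (\<lambda>x. G x $ j $ j * pdiff i \<phi> x)))"
    by (intro sum.cong refl arg_cong[where f = "\<lambda>t. v $ _ * t"] swap)
  also have "\<dots> = 0"
    by (simp add: trace)
  finally show "integral\<^sup>L lebesgue (\<lambda>x. (v v* G x) \<bullet> grad3 \<phi> x) = 0" .
qed

lemma is_gradient_field_matrix_vector_mult:
  assumes grad: "weak_grad u G"
  shows "is_gradient_field (\<lambda>x. G x *v v)"
  unfolding is_gradient_field_def
proof (intro allI impI)
  fix z assume z: "test_field z \<and> (\<forall>x. div3 z x = 0)"
  have z\<^sub>i: "test_fun (\<lambda>y. z y $ i)" for i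
    using z unfolding test_field_def by blast
  have "(G x *v v) \<bullet> z x = (\<Sum>j\<in>UNIV. v $ j * (\<Sum>i\<in>UNIV. G x $ i $ j * z x $ i))" for x
    by (simp add: inner_vec_def matrix_vector_mult_def sum_3 algebra_simps)
  then have "integral\<^sup>L lebesgue (\<lambda>x. (G x *v v) \<bullet> z x) =
      (\<Sum>j\<in>UNIV. v $ j * (\<Sum>i\<in>UNIV. integral\<^sup>L lebesgue (\<lambda>x. G x $ i $ j * z x $ i)))"
    using weak_grad_integrable(2)[OF grad z\<^sub>i]
    by (simp add: Bochner_Integration.integral_sum Bochner_Integration.integrable_sum)
  also have "\<dots> = (\<Sum>j\<in>UNIV. v $ j * - (\<Sum>i\<in>UNIV. integral\<^sup>L lebesgue (\<lambda>x. u x $ j * pdiff i (\<lambda>y. z y $ i) x)))"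
    by (simp add: weak_grad_integral_by_parts[OF grad z\<^sub>i] sum_negf)
  also have "\<dots> = (\<Sum>j\<in>UNIV. v $ j * - integral\<^sup>L lebesgue (\<lambda>x. u x $ j * div3 z x))"
    using weak_grad_integrable(1)[OF grad test_fun_pdiff[OF z\<^sub>i]]
    by (simp add: div3_def sum_distrib_left Bochner_Integration.integral_sum)
  also have "\<dots> = 0"
    using z by simp
  finally show "integral\<^sup>L lebesgue (\<lambda>x. (G x *v v) \<bullet> z x) = 0" .
qed

lemma in_Lq_bounded_linear:
  fixes f :: "real^3 \<Rightarrow> 'a::euclidean_space" and L :: "'a \<Rightarrow> 'b::euclidean_space"
  assumes f: "in_Lq q f" and L: "bounded_linear L" and "q > 0"
  shows "in_Lq q (\<lambda>x. L (f x))"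
proof -
  obtain K where "K > 0" and K: "\<And>y. norm (L y) \<le> norm y * K"
    using bounded_linear.pos_bounded[OF L] by blast
  have meas: "(\<lambda>x. L (f x)) \<in> borel_measurable lebesgue"
    using f measurable_compose[OF _ borel_measurable_continuous_onI[OF linear_continuous_on[OF L]]]
    unfolding in_Lq_def by blast
  have "integrable lebesgue (\<lambda>x. norm (L (f x)) powr q)"
  proof (rule Bochner_Integration.integrable_bound)
    show "integrable lebesgue (\<lambda>x. K powr q * norm (f x) powr q)"
      using f unfolding in_Lq_def by simp
    show "(\<lambda>x. norm (L (f x)) powr q) \<in> borel_measurable lebesgue"
      using meas by measurable
    have "norm (L y) powr q \<le> K powr q * norm y powr q" for y
    proof -
      have "norm (L y) powr q \<le> (norm y * K) powr q"
        using K \<open>q > 0\<close> by (intro powr_mono2) auto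
      also have "\<dots> = K powr q * norm y powr q"
        by (simp add: powr_mult)
      finally show ?thesis .
    qed
    then show "AE x in lebesgue. norm (norm (L (f x)) powr q) \<le> norm (K powr q * norm (f x) powr q)"
      by (intro AE_I2) simp
  qed
  with meas show ?thesis
    unfolding in_Lq_def by simp
qed

lemma in_Lq_uminus: "in_Lq q f \<Longrightarrow> in_Lq q (\<lambda>x. - f x)"
  unfolding in_Lq_def by (simp add: borel_measurable_uminus)

lemma Lq_norm_uminus: "Lq_norm q (\<lambda>x. - f x) = Lq_norm q f"
  unfolding Lq_norm_def by simp

lemma Lq_norm_nonneg: "Lq_norm q f \<ge> 0"
  unfolding Lq_norm_def by simp

lemma Lq_norm_powr:
  assumes "q > 0"
  shows "Lq_norm q f powr q = integral\<^sup>L lebesgue (\<lambda>x. norm (f x) powr q)"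
proof -
  have "integral\<^sup>L lebesgue (\<lambda>x. norm (f x) powr q) \<ge> 0"
    by (intro integral_nonneg_AE) auto
  then show ?thesis
    using assms unfolding Lq_norm_def by (simp add: powr_powr)
qed

lemma powr_add_le_convex:
  fixes a b q :: real
  assumes "a \<ge> 0" "b \<ge> 0" "q \<ge> 1"
  shows "(a + b) powr q \<le> 2 powr (q - 1) * (a powr q + b powr q)"
proof -
  have one: "2 powr (q - 1) \<ge> 1"
    using assms by (simp add: ge_one_powr_ge_zero)
  consider "a = 0" | "b = 0" | "a > 0" "b > 0"
    using assms by linarith
  then show ?thesis
  proof cases
    case 3
    have "((1 - 1/2) *\<^sub>R a + (1/2) *\<^sub>R b) powr q \<le> (1 - 1/2) * a powr q + (1/2) * b powr q"
      using convex_onD[OF powr_convex[OF assms(3)], of "1/2" a b] 3 by simp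
    then have mid: "((a + b) / 2) powr q \<le> (a powr q + b powr q) / 2"
      by (simp add: field_simps)
    have "2 * ((a + b) / 2) = a + b"
      by simp
    then have "(a + b) powr q = (2 * ((a + b) / 2)) powr q"
      by (simp only:)
    also have "\<dots> = 2 powr q * ((a + b) / 2) powr q"
      by (rule powr_mult)
    also have "\<dots> \<le> 2 powr q * ((a powr q + b powr q) / 2)"
      using mid by simp
    also have "\<dots> = 2 powr (q - 1) * (a powr q + b powr q)"
      by (simp add: powr_diff)
    finally show ?thesis .
  qed (use one in \<open>simp_all add: mult_le_cancel_right1\<close>)
qed

lemma norm_add_powr_le:
  fixes x y :: "'a::real_normed_vector"
  assumes "q \<ge> 1"
  shows "norm (x + y) powr q \<le> 2 powr (q - 1) * (norm x powr q + norm y powr q)"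
  using assms norm_triangle_ineq[of x y]
  by (intro order_trans[OF powr_mono2 powr_add_le_convex]) auto

lemma in_Lq_add:
  fixes f g :: "real^3 \<Rightarrow> 'a::euclidean_space"
  assumes q: "q \<ge> 1" and f: "in_Lq q f" and g: "in_Lq q g"
  shows "in_Lq q (\<lambda>x. f x + g x)"
proof -
  have meas: "(\<lambda>x. f x + g x) \<in> borel_measurable lebesgue"
    using f g unfolding in_Lq_def by (intro borel_measurable_add) auto
  have "integrable lebesgue (\<lambda>x. norm (f x + g x) powr q)"
  proof (rule Bochner_Integration.integrable_bound)
    show "integrable lebesgue (\<lambda>x. 2 powr (q - 1) * (norm (f x) powr q + norm (g x) powr q))"
      using f g unfolding in_Lq_def by (intro integrable_mult_right Bochner_Integration.integrable_add) auto
    show "(\<lambda>x. norm (f x + g x) powr q) \<in> borel_measurable lebesgue"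
      using meas by measurable
    show "AE x in lebesgue. norm (norm (f x + g x) powr q)
        \<le> norm (2 powr (q - 1) * (norm (f x) powr q + norm (g x) powr q))"
      using norm_add_powr_le[OF q] by (intro AE_I2) (simp add: abs_of_nonneg)
  qed
  with meas show ?thesis
    unfolding in_Lq_def by simp
qed

lemma integral_norm_powr_le:
  assumes "q > 0" "Lq_norm q f \<le> A"
  shows "integral\<^sup>L lebesgue (\<lambda>x. norm (f x) powr q) \<le> A powr q"
  using powr_mono2[OF _ Lq_norm_nonneg assms(2), of q] assms(1) by (simp add: Lq_norm_powr)

lemma Lq_norm_add_le:
  fixes f g :: "real^3 \<Rightarrow> 'a::euclidean_space"
  assumes q: "q \<ge> 1" and f: "in_Lq q f" and g: "in_Lq q g"
    and A: "Lq_norm q f \<le> A" "Lq_norm q g \<le> A"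
  shows "Lq_norm q (\<lambda>x. f x + g x) \<le> 2 * A"
proof -
  have "A \<ge> 0"
    using A(1) Lq_norm_nonneg order_trans by blast
  have "integral\<^sup>L lebesgue (\<lambda>x. norm (f x + g x) powr q)
      \<le> integral\<^sup>L lebesgue (\<lambda>x. 2 powr (q - 1) * (norm (f x) powr q + norm (g x) powr q))"
    using in_Lq_add[OF q f g] f g q unfolding in_Lq_def
    by (intro integral_mono integrable_mult_right Bochner_Integration.integrable_add norm_add_powr_le) auto
  also have "\<dots> = 2 powr (q - 1) * (integral\<^sup>L lebesgue (\<lambda>x. norm (f x) powr q)
      + integral\<^sup>L lebesgue (\<lambda>x. norm (g x) powr q))"
    using f g unfolding in_Lq_def by simp
  also have "\<dots> \<le> 2 powr (q - 1) * (A powr q + A powr q)"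
    using q A by (intro mult_left_mono add_mono integral_norm_powr_le) auto
  also have "\<dots> = (2 * A) powr q"
    using \<open>A \<ge> 0\<close> by (simp add: powr_diff powr_mult)
  finally have "integral\<^sup>L lebesgue (\<lambda>x. norm (f x + g x) powr q) \<le> (2 * A) powr q" .
  then have "Lq_norm q (\<lambda>x. f x + g x) \<le> ((2 * A) powr q) powr (1 / q)"
    unfolding Lq_norm_def using q by (intro powr_mono2) (auto intro: integral_nonneg_AE)
  also have "\<dots> = 2 * A"
    using \<open>A \<ge> 0\<close> q by (simp add: powr_powr)
  finally show ?thesis .
qed

lemma helmholtz_const_bounds:
  assumes C: "helmholtz_const q C" and q: "q \<ge> 1"
    and a: "in_Lq q a" "weakly_div_free a" and b: "in_Lq q b" "is_gradient_field b"
  shows "Lq_norm q a \<le> C * Lq_norm q (\<lambda>x. a x + b x)"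
    and "Lq_norm q b \<le> C * Lq_norm q (\<lambda>x. a x + b x)"
  using C in_Lq_add[OF q a(1) b(1)] a b unfolding helmholtz_const_def by auto

lemma cross3_curl_of: "cross3 v (curl_of M) = - (v v* M) + M *v v"
  unfolding vec_eq_iff forall_3
  by (simp add: cross3_def curl_of_def matrix_vector_mult_def vector_matrix_mult_def sum_3 algebra_simps)

lemma scaleR_2_sym_part_mult: "2 *\<^sub>R (sym_part M *v v) = v v* M + M *v v"
  unfolding vec_eq_iff forall_3
  by (simp add: sym_part_def transpose_def matrix_vector_mult_def vector_matrix_mult_def sum_3 algebra_simps)

lemma bounded_linear_vector_matrix_mult_left: "bounded_linear (\<lambda>M::real^'n^'m. v v* M)"
  unfolding linear_conv_bounded_linear[symmetric]
  by (rule linearI) (simp_all add: vec_eq_iff vector_matrix_mult_def sum.distrib sum_distrib_left algebra_simps)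

lemma bounded_linear_matrix_vector_mult_left: "bounded_linear (\<lambda>M::real^'n^'m. M *v v)"
  unfolding linear_conv_bounded_linear[symmetric]
  by (rule linearI) (simp_all add: vec_eq_iff matrix_vector_mult_def sum.distrib sum_distrib_left algebra_simps)

theorem proposition3p2:
  fixes q C :: real and u :: "real^3 \<Rightarrow> real^3" and G :: "real^3 \<Rightarrow> real^3^3"
    and v :: "real^3"
  assumes q: "1 < q"
    and C: "helmholtz_const q C"
    and grad: "weak_grad u G"
    and gradLq: "in_Lq q G"
    and divfree: "AE x in lebesgue. (\<Sum>i\<in>UNIV. G x $ i $ i) = 0"
    and v: "norm v = 1"
  defines "\<omega> \<equiv> \<lambda>x. curl_of (G x)"
    and "S \<equiv> \<lambda>x. sym_part (G x)"
  shows "Lq_norm q (\<lambda>x. v v* G x) \<le> C * Lq_norm q (\<lambda>x. cross3 v (\<omega> x)) \<and>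
         Lq_norm q (\<lambda>x. v v* G x) \<le> C * Lq_norm q (\<lambda>x. 2 *\<^sub>R (S x *v v)) \<and>
         Lq_norm q (\<lambda>x. G x *v v) \<le> C * Lq_norm q (\<lambda>x. cross3 v (\<omega> x)) \<and>
         Lq_norm q (\<lambda>x. G x *v v) \<le> C * Lq_norm q (\<lambda>x. 2 *\<^sub>R (S x *v v)) \<and>
         1 / (2 * C) * Lq_norm q (\<lambda>x. cross3 v (\<omega> x)) \<le> Lq_norm q (\<lambda>x. 2 *\<^sub>R (S x *v v)) \<and>
         Lq_norm q (\<lambda>x. 2 *\<^sub>R (S x *v v)) \<le> 2 * C * Lq_norm q (\<lambda>x. cross3 v (\<omega> x))"
proof -
  define a b where "a = (\<lambda>x. v v* G x)" and "b = (\<lambda>x. G x *v v)"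
  have "q \<ge> 1" "q > 0" and "C > 0"
    using q C unfolding helmholtz_const_def by auto
  have a: "in_Lq q a" "weakly_div_free a" and b: "in_Lq q b" "is_gradient_field b"
    unfolding a_def b_def
    using in_Lq_bounded_linear[OF gradLq bounded_linear_vector_matrix_mult_left \<open>q > 0\<close>]
      in_Lq_bounded_linear[OF gradLq bounded_linear_matrix_vector_mult_left \<open>q > 0\<close>]
      weakly_div_free_vector_matrix_mult[OF grad divfree] is_gradient_field_matrix_vector_mult[OF grad]
    by auto
  have a': "in_Lq q (\<lambda>x. - a x)" "weakly_div_free (\<lambda>x. - a x)"
    using in_Lq_uminus[OF a(1)] a(2) unfolding weakly_div_free_def by simp_all
  have curl: "(\<lambda>x. cross3 v (\<omega> x)) = (\<lambda>x. - a x + b x)"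
    by (simp add: \<omega>_def a_def b_def cross3_curl_of)
  have strain: "(\<lambda>x. 2 *\<^sub>R (S x *v v)) = (\<lambda>x. a x + b x)"
    by (simp add: S_def a_def b_def scaleR_2_sym_part_mult)
  have by_curl: "Lq_norm q a \<le> C * Lq_norm q (\<lambda>x. cross3 v (\<omega> x))"
      "Lq_norm q b \<le> C * Lq_norm q (\<lambda>x. cross3 v (\<omega> x))"
    using helmholtz_const_bounds[OF C \<open>q \<ge> 1\<close> a' b] unfolding curl Lq_norm_uminus by auto
  have by_strain: "Lq_norm q a \<le> C * Lq_norm q (\<lambda>x. 2 *\<^sub>R (S x *v v))"
      "Lq_norm q b \<le> C * Lq_norm q (\<lambda>x. 2 *\<^sub>R (S x *v v))"
    using helmholtz_const_bounds[OF C \<open>q \<ge> 1\<close> a b] unfolding strain by auto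
  have "Lq_norm q (\<lambda>x. cross3 v (\<omega> x)) \<le> 2 * (C * Lq_norm q (\<lambda>x. 2 *\<^sub>R (S x *v v)))"
    unfolding curl using by_strain by (intro Lq_norm_add_le \<open>q \<ge> 1\<close> a' b) (simp_all add: Lq_norm_uminus)
  moreover have "Lq_norm q (\<lambda>x. 2 *\<^sub>R (S x *v v)) \<le> 2 * (C * Lq_norm q (\<lambda>x. cross3 v (\<omega> x)))"
    unfolding strain using by_curl by (intro Lq_norm_add_le \<open>q \<ge> 1\<close> a b)
  ultimately show ?thesis
    using by_curl by_strain \<open>C > 0\<close> unfolding a_def b_def by (simp add: field_simps)
qed

end
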